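(* Let $f:\mathcal{P}_2(H)\to U$ and $X_0\in L^2(\Omega,H)$ with $\mathcal{L}(X_0)=\sum_{k=1}^Np_k\delta_{x_k}$, where $x_1,\dots,x_N\in H$ are distinct and $p_k>0$, $\sum_kp_k=1$. Assume the lift $\hat f(X)=f(\mathcal{L}(X))$ is Fréchet differentiable at $X_0$ with $D\hat f(X_0)\in\Lambda_2^{\mathbb{P}}(H,U)$. Then for every $k$, every $A\in\mathcal{F}$ and $u\in H$, $$D\hat f(X_0)(\mathbf{1}_{A\cap\{X_0=x_k\}}u)=\mathbb{P}(A\mid X_0=x_k)\,D\hat f(X_0)(\mathbf{1}_{\{X_0=x_k\}}u).$$
   Context: $(\Omega,\mathcal{F},\mathbb{P})$ is a complete atomless probability space, $\Omega$ Polish with Borel $\sigma$-field; $H,U$ separable real Hilbert spaces. $\mathbb{P}(A\mid X_0=x_k)=\mathbb{P}(A\cap\{X_0=x_k\})/p_k$. For bounded linear $L:L^2(\Omega,H)\to U$, $|\!|\!|L|\!|\!|_{2,\mathbb{P}}:=\sup\{\sum_i\|L(\mathbf{1}_{A_i}x_i)\|_U:A_i\in\mathcal{F}$ pairwise disjoint, $x_i\in H$, $\mathbb{E}\|\sum_i\mathbf{1}_{A_i}x_i\|_H^2\le1\}$, and $\Lambda_2^{\mathbb{P}}(H,U)$ is the set of such $L$ with finite norm. *)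

theory Defs
  imports "HOL-Probability.Probability"
begin

definition atomless :: "'w measure \<Rightarrow> bool" where
  "atomless M \<longleftrightarrow> (\<forall>A\<in>sets M. 0 < measure M A \<longrightarrow>
      (\<exists>B\<in>sets M. B \<subseteq> A \<and> 0 < measure M B \<and> measure M B < measure M A))"

definition L2 :: "'w measure \<Rightarrow> ('w \<Rightarrow> 'h::{real_normed_vector, second_countable_topology}) set" where
  "L2 M = {X. X \<in> borel_measurable M \<and> integrable M (\<lambda>w. (norm (X w))\<^sup>2)}"

definition L2norm :: "'w measure \<Rightarrow> ('w \<Rightarrow> 'h::real_normed_vector) \<Rightarrow> real" where
  "L2norm M X = sqrt (\<integral>w. (norm (X w))\<^sup>2 \<partial>M)"

text \<open>Bounded linear maps L^2(Omega,H) -> U, given on representatives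
  (well defined on a.e.-classes).\<close>
definition bounded_linear_L2 ::
  "'w measure \<Rightarrow> (('w \<Rightarrow> 'h::{real_normed_vector, second_countable_topology}) \<Rightarrow> 'u::real_normed_vector) \<Rightarrow> bool" where
  "bounded_linear_L2 M L \<longleftrightarrow>
     (\<forall>X\<in>L2 M. \<forall>Y\<in>L2 M. L (\<lambda>w. X w + Y w) = L X + L Y) \<and>
     (\<forall>X\<in>L2 M. \<forall>c::real. L (\<lambda>w. c *\<^sub>R X w) = c *\<^sub>R L X) \<and>
     (\<forall>X\<in>L2 M. \<forall>Y\<in>L2 M. (AE w in M. X w = Y w) \<longrightarrow> L X = L Y) \<and>
     (\<exists>C. \<forall>X\<in>L2 M. norm (L X) \<le> C * L2norm M X)"

definition frechet_L2 ::
  "'w measure \<Rightarrow> (('w \<Rightarrow> 'h::{real_normed_vector, second_countable_topology}) \<Rightarrow> 'u::real_normed_vector)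
     \<Rightarrow> ('w \<Rightarrow> 'h) \<Rightarrow> (('w \<Rightarrow> 'h) \<Rightarrow> 'u) \<Rightarrow> bool" where
  "frechet_L2 M F X0 L \<longleftrightarrow> X0 \<in> L2 M \<and> bounded_linear_L2 M L \<and>
     (\<forall>e>0. \<exists>d>0. \<forall>X\<in>L2 M. L2norm M (\<lambda>w. X w - X0 w) < d \<longrightarrow>
        norm (F X - F X0 - L (\<lambda>w. X w - X0 w)) \<le> e * L2norm M (\<lambda>w. X w - X0 w))"

text \<open>Membership in Lambda_2^P(H,U): finiteness of the triple norm
  (supremum over finite families of pairwise disjoint events).\<close>
definition Lambda2 ::
  "'w measure \<Rightarrow> (('w \<Rightarrow> 'h::{real_normed_vector, second_countable_topology}) \<Rightarrow> 'u::real_normed_vector) \<Rightarrow> bool" where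
  "Lambda2 M L \<longleftrightarrow> bounded_linear_L2 M L \<and>
     (\<exists>C. \<forall>n::nat. \<forall>A::nat \<Rightarrow> 'w set. \<forall>x::nat \<Rightarrow> 'h.
        (\<forall>i<n. A i \<in> sets M) \<and> disjoint_family_on A {..<n} \<and>
        (\<integral>w. (norm (\<Sum>i<n. indicator (A i) w *\<^sub>R x i))\<^sup>2 \<partial>M) \<le> 1 \<longrightarrow>
        (\<Sum>i<n. norm (L (\<lambda>w. indicator (A i) w *\<^sub>R x i))) \<le> C)"

end

(* For B inside the atom C = {X0 = x k}, the law of X0 + t 1_B u depends on B only through
   P(B).  A derivative of X \<mapsto> f (law X) only sees laws, so comparing directional derivatives
   shows that L (1_B u) = \<phi> (P B) for some function \<phi>.  As M is atomless, every value in
   [0, p k] is the probability of some B \<subseteq> C; hence \<phi> is additive on [0, p k], and boundedness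
   of L gives norm (\<phi> s) \<le> K sqrt s.  An additive function on an interval with this bound is
   linear, \<phi> s = (s / p k) \<phi> (p k), which is the claim for B = A \<inter> C. *)

theory Submission
  imports Defs
begin

lemma (in prob_space) atomless_exists_small_subevent:
  assumes atomless: "atomless M" and A: "A \<in> events" "0 < prob A" and e: "0 < e"
  shows "\<exists>B\<in>events. B \<subseteq> A \<and> 0 < prob B \<and> prob B \<le> e"
proof -
  have halving: "\<exists>B\<in>events. B \<subseteq> A \<and> 0 < prob B \<and> prob B \<le> (1/2)^n" for n
  proof (induction n)
    case 0
    then show ?case using A by auto
  next
    case (Suc n)
    then obtain B where B: "B \<in> events" "B \<subseteq> A" "0 < prob B" "prob B \<le> (1/2)^n"
      by blast
    then obtain B' where B': "B' \<in> events" "B' \<subseteq> B" "0 < prob B'" "prob B' < prob B"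
      using atomless unfolding atomless_def by blast
    have "prob (B - B') = prob B - prob B'"
      using B B' by (intro finite_measure_Diff) auto
    then consider "prob B' \<le> prob B / 2" | "prob (B - B') \<le> prob B / 2" "0 < prob (B - B')"
      using B' by linarith
    then show ?case
    proof cases
      case 1
      then show ?thesis
        using B B' by (intro bexI[of _ B']) auto
    next
      case 2
      then show ?thesis
        using B B' by (intro bexI[of _ "B - B'"]) auto
    qed
  qed
  obtain n where "(1/2::real)^n < e"
    using real_arch_pow_inv[OF e, of "1/2"] by auto
  then show ?thesis
    using halving[of n] by (meson order.trans less_imp_le)
qed

lemma (in prob_space) exists_event_half_maximal:
  assumes "S \<subseteq> events" "{} \<in> S"
  shows "\<exists>E\<in>S. \<forall>F\<in>S. prob F \<le> 2 * prob E"
proof -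
  have bdd: "bdd_above (prob ` S)"
    by (intro bdd_aboveI[where M=1]) auto
  have le_Sup: "prob F \<le> Sup (prob ` S)" if "F \<in> S" for F
    using that by (intro cSup_upper[OF _ bdd]) auto
  show ?thesis
  proof (cases "Sup (prob ` S) \<le> 0")
    case True
    then show ?thesis
      using assms(2) le_Sup by (intro bexI[of _ "{}"]) (auto intro: order.trans)
  next
    case False
    then obtain E where "E \<in> S" "Sup (prob ` S) / 2 < prob E"
      using less_cSup_iff[OF _ bdd, of "Sup (prob ` S) / 2"] assms(2) by auto
    then show ?thesis
      using le_Sup by (intro bexI[of _ E]) fastforce+
  qed
qed

(* Greedy exhaustion: each step adds at least half of the largest admissible mass.  These masses
   are summable, hence tend to 0, so no admissible event of positive mass survives in the limit. *)
lemma (in prob_space) exists_saturated_subevent: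
  assumes A: "A \<in> events" and t: "0 \<le> t"
  shows "\<exists>B\<in>events. B \<subseteq> A \<and> prob B \<le> t \<and>
           (\<forall>F\<in>events. F \<subseteq> A - B \<longrightarrow> prob B + prob F \<le> t \<longrightarrow> prob F = 0)"
proof -
  define adm where "adm D = {E \<in> events. E \<subseteq> A - D \<and> prob D + prob E \<le> t}" for D
  have "\<forall>D. \<exists>E. prob D \<le> t \<longrightarrow> E \<in> adm D \<and> (\<forall>F\<in>adm D. prob F \<le> 2 * prob E)"
    using exists_event_half_maximal[of "adm _"] by (auto simp: adm_def)
  then obtain next_event where next_event:
    "\<And>D. prob D \<le> t \<Longrightarrow> next_event D \<in> adm D \<and> (\<forall>F\<in>adm D. prob F \<le> 2 * prob (next_event D))"
    by metis
  define B where "B n = ((\<lambda>D. D \<union> next_event D) ^^ n) {}" for n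
  define E where "E n = next_event (B n)" for n
  have B_Suc: "B (Suc n) = B n \<union> E n" for n
    by (simp add: B_def E_def)
  have B: "B n \<in> events \<and> B n \<subseteq> A \<and> prob (B n) \<le> t" for n
  proof (induction n)
    case 0
    then show ?case using t by (simp add: B_def)
  next
    case (Suc n)
    then have "E n \<in> adm (B n)"
      using next_event by (simp add: E_def)
    then show ?case
      using Suc measure_Un_le[where A="B n" and B="E n" and M=M] by (auto simp: B_Suc adm_def)
  qed
  have E: "E n \<in> adm (B n)" "\<forall>F\<in>adm (B n). prob F \<le> 2 * prob (E n)" for n
    using next_event B by (simp_all add: E_def)
  have "prob (B (Suc n)) = prob (B n) + prob (E n)" for n
    using B[of n] E(1)[of n] by (auto simp: B_Suc adm_def intro!: finite_measure_Union)
  then have sum_E: "(\<Sum>i<n. prob (E i)) = prob (B n)" for n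
    by (induction n) (simp_all add: B_def)
  have "summable (\<lambda>n. prob (E n))"
    by (rule summableI_nonneg_bounded[where x=1]) (simp_all add: sum_E)
  then have E_to_0: "(\<lambda>n. prob (E n)) \<longlonglongrightarrow> 0"
    by (rule summable_LIMSEQ_zero)
  define B_lim where "B_lim = (\<Union>n. B n)"
  have B_lim: "B_lim \<in> events" "B_lim \<subseteq> A"
    using B by (auto simp: B_lim_def)
  have "incseq B"
    by (rule incseq_SucI) (simp add: B_Suc)
  then have "(\<lambda>n. prob (B n)) \<longlonglongrightarrow> prob B_lim"
    unfolding B_lim_def using B by (intro finite_Lim_measure_incseq) auto
  then have "prob B_lim \<le> t"
    using B by (intro LIMSEQ_le_const2) auto
  moreover have "prob F = 0"
    if F: "F \<in> events" "F \<subseteq> A - B_lim" "prob B_lim + prob F \<le> t" for F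
  proof -
    have sub: "B n \<subseteq> B_lim" for n
      by (auto simp: B_lim_def)
    have "F \<in> adm (B n)" for n
      using F sub[of n] finite_measure_mono[OF sub[of n] B_lim(1)] by (auto simp: adm_def)
    then have "prob F \<le> 2 * prob (E n)" for n
      using E(2) by blast
    then have "prob F \<le> 2 * 0"
      by (intro LIMSEQ_le_const[OF tendsto_mult_left[OF E_to_0]]) auto
    then show ?thesis
      using measure_nonneg[of M F] by linarith
  qed
  ultimately show ?thesis
    using B_lim by blast
qed

lemma (in prob_space) atomless_exists_subevent_prob_eq:
  assumes atomless: "atomless M" and A: "A \<in> events" and t: "0 \<le> t" "t \<le> prob A"
  shows "\<exists>B\<in>events. B \<subseteq> A \<and> prob B = t"
proof -
  obtain B where B: "B \<in> events" "B \<subseteq> A" "prob B \<le> t"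
    and saturated: "\<And>F. F \<in> events \<Longrightarrow> F \<subseteq> A - B \<Longrightarrow> prob B + prob F \<le> t \<Longrightarrow> prob F = 0"
    using exists_saturated_subevent[OF A t(1)] by blast
  show ?thesis
  proof (rule ccontr)
    assume "\<not> ?thesis"
    then have "prob B < t"
      using B by force
    moreover have "prob (A - B) = prob A - prob B"
      using A B by (intro finite_measure_Diff) auto
    ultimately obtain F where "F \<in> events" "F \<subseteq> A - B" "0 < prob F" "prob F \<le> t - prob B"
      using atomless_exists_small_subevent[OF atomless, of "A - B" "t - prob B"] A B t by auto
    then show False
      using saturated by force
  qed
qed

lemma additive_on_interval_of_nat_mult:
  fixes g :: "real \<Rightarrow> 'a::real_vector"
  assumes add: "\<And>a b. 0 \<le> a \<Longrightarrow> 0 \<le> b \<Longrightarrow> a + b \<le> p \<Longrightarrow> g (a + b) = g a + g b"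
    and h: "0 \<le> h" "real j * h \<le> p"
  shows "g (real j * h) = real j *\<^sub>R g h"
  using h(2)
proof (induction j)
  case 0
  then show ?case
    using add[of 0 0] by simp
next
  case (Suc j)
  have "real j * h \<le> real (Suc j) * h"
    using h(1) by (simp add: mult_right_mono)
  then have "g (real j * h) = real j *\<^sub>R g h"
    using Suc by simp
  moreover have "g (real (Suc j) * h) = g (real j * h) + g h"
    using add[of "real j * h" h] Suc.prems h(1) by (simp add: algebra_simps)
  ultimately show ?case
    by (simp add: algebra_simps)
qed

lemma additive_on_interval_vanishing_at_end:
  fixes g :: "real \<Rightarrow> 'a::real_normed_vector"
  assumes p: "0 < p"
    and add: "\<And>a b. 0 \<le> a \<Longrightarrow> 0 \<le> b \<Longrightarrow> a + b \<le> p \<Longrightarrow> g (a + b) = g a + g b"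
    and g_p: "g p = 0"
    and bound: "\<And>t. 0 \<le> t \<Longrightarrow> t \<le> p \<Longrightarrow> norm (g t) \<le> K * sqrt t"
    and s: "0 \<le> s" "s \<le> p"
  shows "g s = 0"
proof -
  have K: "0 \<le> K"
    using order.trans[OF norm_ge_zero bound[of p]] p by (simp add: zero_le_mult_iff)
  \<comment> \<open>n g (p/n) = g p = 0, so g vanishes on the grid of mesh p/n, and s is within p/n of it.\<close>
  have grid: "g (real j * (p / real n)) = 0" if "j \<le> n" "0 < n" for j n
  proof -
    have "real n *\<^sub>R g (p / real n) = g p"
      using additive_on_interval_of_nat_mult[where g=g and p=p and h="p / real n" and j=n, OF add] p that by simp
    then have "g (p / real n) = 0"
      using g_p that by simp
    moreover have "real j * (p / real n) \<le> p"
      using that p by (simp add: field_simps mult_right_mono)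
    ultimately show ?thesis
      using additive_on_interval_of_nat_mult[where g=g and p=p and h="p / real n" and j=j, OF add] p by simp
  qed
  have approx: "norm (g s) \<le> K * sqrt (p / real n)" if n: "0 < n" for n
  proof -
    define j where "j = nat \<lfloor>s * real n / p\<rfloor>"
    define r where "r = s - real j * (p / real n)"
    have j_le: "real j \<le> s * real n / p" and j_gt: "s * real n / p < real j + 1"
      using s p by (simp_all add: j_def of_nat_nat)
    have "s * real n / p \<le> real n"
      using s p by (simp add: divide_le_eq mult.commute mult_right_mono)
    then have j: "j \<le> n"
      using j_le by linarith
    have "r * real n = s * real n - real j * p"
      using n by (simp add: r_def field_simps)
    moreover have "real j * p \<le> s * real n" "s * real n < (real j + 1) * p"
      using j_le j_gt p by (simp_all add: field_simps)
    ultimately have "0 \<le> r * real n" "r * real n \<le> p"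
      by (simp_all add: algebra_simps)
    then have r: "0 \<le> r" "r \<le> p / real n"
      using n by (simp_all add: zero_le_mult_iff le_divide_eq)
    have "g s = g (real j * (p / real n)) + g r"
      using add[of "real j * (p / real n)" r] r s p by (simp add: r_def)
    then have "g s = g r"
      using grid[OF j n] by simp
    also have "norm (g r) \<le> K * sqrt r"
    proof (rule bound[OF r(1)])
      have "p / real n \<le> p"
        using n p by (simp add: divide_le_eq)
      then show "r \<le> p"
        using r(2) by linarith
    qed
    also have "\<dots> \<le> K * sqrt (p / real n)"
      using K r by (intro mult_left_mono) auto
    finally show ?thesis .
  qed
  have "(\<lambda>n. K * sqrt (p / real n)) \<longlonglongrightarrow> K * sqrt 0"
    by (intro tendsto_intros)
  then have "norm (g s) \<le> 0"
    using approx by (intro LIMSEQ_le_const) (auto intro!: exI[of _ 1])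
  then show ?thesis
    by simp
qed

lemma additive_on_interval_linear:
  fixes \<phi> :: "real \<Rightarrow> 'a::real_normed_vector"
  assumes p: "0 < p"
    and add: "\<And>a b. 0 \<le> a \<Longrightarrow> 0 \<le> b \<Longrightarrow> a + b \<le> p \<Longrightarrow> \<phi> (a + b) = \<phi> a + \<phi> b"
    and bound: "\<And>t. 0 \<le> t \<Longrightarrow> t \<le> p \<Longrightarrow> norm (\<phi> t) \<le> K * sqrt t"
    and s: "0 \<le> s" "s \<le> p"
  shows "\<phi> s = (s / p) *\<^sub>R \<phi> p"
proof -
  define g where "g t = \<phi> t - (t / p) *\<^sub>R \<phi> p" for t
  have K: "0 \<le> K"
    using order.trans[OF norm_ge_zero bound[of p]] p by (simp add: zero_le_mult_iff)
  have "g s = 0"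
  proof (rule additive_on_interval_vanishing_at_end[OF p _ _ _ s])
    show "g (a + b) = g a + g b" if "0 \<le> a" "0 \<le> b" "a + b \<le> p" for a b
      using add[OF that] by (simp add: g_def add_divide_distrib scaleR_add_left)
    show "g p = 0"
      using p by (simp add: g_def)
    show "norm (g t) \<le> (2 * K) * sqrt t" if t: "0 \<le> t" "t \<le> p" for t
    proof -
      have "norm (g t) \<le> norm (\<phi> t) + (t / p) * norm (\<phi> p)"
        using norm_triangle_ineq4[of "\<phi> t" "(t / p) *\<^sub>R \<phi> p"] t p by (simp add: g_def)
      also have "\<dots> \<le> K * sqrt t + (t / p) * (K * sqrt p)"
        using bound[OF t] bound[of p] t p by (intro add_mono mult_left_mono) auto
      also have "(t / p) * (K * sqrt p) = K * sqrt t * (sqrt t / sqrt p)"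
        using t p by (simp add: field_simps real_sqrt_mult[symmetric])
      also have "\<dots> \<le> K * sqrt t"
        using t p K by (intro mult_left_le) (auto simp: divide_le_eq_1)
      finally show ?thesis
        by simp
    qed
  qed
  then show ?thesis
    by (simp add: g_def)
qed

lemma L2_indicator_scaleR:
  assumes "finite_measure M" "B \<in> sets M"
  shows "(\<lambda>w. indicator B w *\<^sub>R u) \<in> L2 M"
  unfolding L2_def
proof (intro CollectI conjI)
  show "(\<lambda>w. indicator B w *\<^sub>R u) \<in> borel_measurable M"
    using assms(2) by measurable
  show "integrable M (\<lambda>w. (norm (indicator B w *\<^sub>R u))\<^sup>2)"
  proof (rule finite_measure.integrable_const_bound[OF assms(1), where B="(norm u)\<^sup>2"])
    show "AE w in M. norm ((norm (indicator B w *\<^sub>R u))\<^sup>2) \<le> (norm u)\<^sup>2"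
      by (auto simp: indicator_def)
  qed (use assms(2) in measurable)
qed

lemma L2_scaleR:
  assumes "X \<in> L2 M"
  shows "(\<lambda>w. c *\<^sub>R X w) \<in> L2 M"
proof -
  have "(\<lambda>w. (norm (c *\<^sub>R X w))\<^sup>2) = (\<lambda>w. c\<^sup>2 * (norm (X w))\<^sup>2)"
    by (simp add: power_mult_distrib)
  then show ?thesis
    using assms by (auto simp: L2_def)
qed

lemma norm_add_squared_le: "(norm (a + b))\<^sup>2 \<le> 2 * (norm a)\<^sup>2 + 2 * (norm b)\<^sup>2"
proof -
  have "(norm (a + b))\<^sup>2 \<le> (norm a + norm b)\<^sup>2"
    by (intro power_mono norm_triangle_ineq) simp
  also have "\<dots> \<le> 2 * (norm a)\<^sup>2 + 2 * (norm b)\<^sup>2"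
    using sum_squares_ge_zero[of "norm a - norm b" 0] by (simp add: power2_eq_square algebra_simps)
  finally show ?thesis .
qed

lemma L2_add:
  assumes X: "X \<in> L2 M" and Y: "Y \<in> L2 M"
  shows "(\<lambda>w. X w + Y w) \<in> L2 M"
  unfolding L2_def
proof (intro CollectI conjI)
  show "(\<lambda>w. X w + Y w) \<in> borel_measurable M"
    using X Y by (auto simp: L2_def)
  have "integrable M (\<lambda>w. 2 * (norm (X w))\<^sup>2 + 2 * (norm (Y w))\<^sup>2)"
    using X Y by (auto simp: L2_def)
  then show "integrable M (\<lambda>w. (norm (X w + Y w))\<^sup>2)"
    by (rule Bochner_Integration.integrable_bound)
       (use X Y in \<open>auto simp: L2_def intro!: AE_I2 order.trans[OF _ norm_add_squared_le]\<close>)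
qed

lemma L2norm_nonneg: "0 \<le> L2norm M X"
  by (simp add: L2norm_def)

lemma L2norm_scaleR: "L2norm M (\<lambda>w. c *\<^sub>R X w) = \<bar>c\<bar> * L2norm M X"
proof -
  have "(\<lambda>w. (norm (c *\<^sub>R X w))\<^sup>2) = (\<lambda>w. c\<^sup>2 * (norm (X w))\<^sup>2)"
    by (simp add: power_mult_distrib)
  then show ?thesis
    by (simp add: L2norm_def real_sqrt_mult)
qed

lemma L2norm_indicator_scaleR:
  assumes "B \<in> sets M"
  shows "L2norm M (\<lambda>w. indicator B w *\<^sub>R u) = norm u * sqrt (measure M B)"
proof -
  have "(\<lambda>w. (norm (indicator B w *\<^sub>R u))\<^sup>2) = (\<lambda>w. indicator B w * (norm u)\<^sup>2)"
    by (auto simp: indicator_def)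
  then show ?thesis
    using assms by (simp add: L2norm_def real_sqrt_mult mult.commute Int_absorb2 sets.sets_into_space)
qed

lemma frechet_L2_L2: "frechet_L2 M F X0 L \<Longrightarrow> X0 \<in> L2 M"
  unfolding frechet_L2_def by blast

lemma frechet_L2_bounded_linear: "frechet_L2 M F X0 L \<Longrightarrow> bounded_linear_L2 M L"
  unfolding frechet_L2_def by blast

lemma bounded_linear_L2_add:
  "bounded_linear_L2 M L \<Longrightarrow> X \<in> L2 M \<Longrightarrow> Y \<in> L2 M \<Longrightarrow> L (\<lambda>w. X w + Y w) = L X + L Y"
  unfolding bounded_linear_L2_def by blast

lemma bounded_linear_L2_scaleR:
  "bounded_linear_L2 M L \<Longrightarrow> X \<in> L2 M \<Longrightarrow> L (\<lambda>w. c *\<^sub>R X w) = c *\<^sub>R L X"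
  unfolding bounded_linear_L2_def by blast

lemma bounded_linear_L2_indicator_Un:
  assumes L: "bounded_linear_L2 M L" and M: "finite_measure M"
    and D: "D \<in> sets M" "D' \<in> sets M" "D \<inter> D' = {}"
  shows "L (\<lambda>w. indicator (D \<union> D') w *\<^sub>R u) = L (\<lambda>w. indicator D w *\<^sub>R u) + L (\<lambda>w. indicator D' w *\<^sub>R u)"
proof -
  have "(\<lambda>w. indicator (D \<union> D') w *\<^sub>R u) = (\<lambda>w. indicator D w *\<^sub>R u + indicator D' w *\<^sub>R u)"
    using D(3) by (auto simp: fun_eq_iff split: split_indicator)
  then show ?thesis
    using bounded_linear_L2_add[OF L L2_indicator_scaleR[OF M D(1)] L2_indicator_scaleR[OF M D(2)]]
    by simp
qed

lemma bounded_linear_L2_indicator_bound: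
  assumes L: "bounded_linear_L2 M L" and M: "finite_measure M"
  obtains K where "\<And>D. D \<in> sets M \<Longrightarrow> norm (L (\<lambda>w. indicator D w *\<^sub>R u)) \<le> K * sqrt (measure M D)"
proof -
  obtain K where K: "\<And>X. X \<in> L2 M \<Longrightarrow> norm (L X) \<le> K * L2norm M X"
    using L unfolding bounded_linear_L2_def by blast
  have "norm (L (\<lambda>w. indicator D w *\<^sub>R u)) \<le> (K * norm u) * sqrt (measure M D)" if "D \<in> sets M" for D
    using K[OF L2_indicator_scaleR[OF M that]] that by (simp add: L2norm_indicator_scaleR mult.assoc)
  then show ?thesis
    using that by blast
qed

lemma frechet_L2_along_ray:
  assumes F: "frechet_L2 M F X0 L" and Y: "Y \<in> L2 M" and e: "0 < e"
  shows "\<forall>\<^sub>F t in at_right 0. norm (F (\<lambda>w. X0 w + t *\<^sub>R Y w) - F X0 - t *\<^sub>R L Y) \<le> e * (t * L2norm M Y)"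
proof -
  define c where "c = L2norm M Y + 1"
  have c: "0 < c" "L2norm M Y < c"
    using L2norm_nonneg[of M Y] by (simp_all add: c_def)
  obtain d where d: "0 < d" and approx: "\<And>X. X \<in> L2 M \<Longrightarrow> L2norm M (\<lambda>w. X w - X0 w) < d \<Longrightarrow>
      norm (F X - F X0 - L (\<lambda>w. X w - X0 w)) \<le> e * L2norm M (\<lambda>w. X w - X0 w)"
    using F e unfolding frechet_L2_def by blast
  show ?thesis
  proof (rule eventually_at_rightI)
    show "0 < d / c"
      using d c by simp
    fix t
    assume "t \<in> {0<..<d / c}"
    then have t: "0 < t" "t * c < d"
      using c by (simp_all add: field_simps)
    have "t * L2norm M Y < d"
      using mult_left_mono[OF less_imp_le[OF c(2)], of t] t by linarith
    then have "L2norm M (\<lambda>w. t *\<^sub>R Y w) < d"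
      using t by (simp add: L2norm_scaleR)
    moreover have "(\<lambda>w. X0 w + t *\<^sub>R Y w) \<in> L2 M"
      using frechet_L2_L2[OF F] Y by (intro L2_add L2_scaleR)
    moreover have "L (\<lambda>w. t *\<^sub>R Y w) = t *\<^sub>R L Y"
      using frechet_L2_bounded_linear[OF F] Y by (rule bounded_linear_L2_scaleR)
    ultimately show "norm (F (\<lambda>w. X0 w + t *\<^sub>R Y w) - F X0 - t *\<^sub>R L Y) \<le> e * (t * L2norm M Y)"
      using approx[of "\<lambda>w. X0 w + t *\<^sub>R Y w"] t by (simp add: L2norm_scaleR)
  qed
qed

lemma frechet_L2_directional_derivative:
  assumes F: "frechet_L2 M F X0 L" and Y: "Y \<in> L2 M"
  shows "((\<lambda>t. (1 / t) *\<^sub>R (F (\<lambda>w. X0 w + t *\<^sub>R Y w) - F X0)) \<longlongrightarrow> L Y) (at_right 0)"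
proof (rule tendstoI)
  fix e :: real
  assume e: "0 < e"
  define c where "c = L2norm M Y + 1"
  have c: "0 < c" "L2norm M Y < c"
    using L2norm_nonneg[of M Y] by (simp_all add: c_def)
  have "\<forall>\<^sub>F t in at_right 0. norm (F (\<lambda>w. X0 w + t *\<^sub>R Y w) - F X0 - t *\<^sub>R L Y) \<le> e / c * (t * L2norm M Y)"
    using e c by (intro frechet_L2_along_ray[OF F Y]) simp
  with eventually_at_right_less
  show "\<forall>\<^sub>F t in at_right 0. dist ((1 / t) *\<^sub>R (F (\<lambda>w. X0 w + t *\<^sub>R Y w) - F X0)) (L Y) < e"
  proof eventually_elim
    case (elim t)
    have "(1 / t) *\<^sub>R (F (\<lambda>w. X0 w + t *\<^sub>R Y w) - F X0) - L Y
        = (1 / t) *\<^sub>R (F (\<lambda>w. X0 w + t *\<^sub>R Y w) - F X0 - t *\<^sub>R L Y)"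
      using elim by (simp add: algebra_simps)
    then have "dist ((1 / t) *\<^sub>R (F (\<lambda>w. X0 w + t *\<^sub>R Y w) - F X0)) (L Y)
        = (1 / t) * norm (F (\<lambda>w. X0 w + t *\<^sub>R Y w) - F X0 - t *\<^sub>R L Y)"
      using elim by (simp add: dist_norm)
    also have "\<dots> \<le> (1 / t) * (e / c * (t * L2norm M Y))"
      using elim by (intro mult_left_mono) auto
    also have "\<dots> = e / c * L2norm M Y"
      using elim by simp
    also have "\<dots> < e"
      using e c by (simp add: field_simps)
    finally show ?case .
  qed
qed

lemma frechet_L2_directional_eq:
  assumes F: "frechet_L2 M F X0 L" and Y: "Y \<in> L2 M" "Y' \<in> L2 M"
    and eq: "\<And>t. 0 < t \<Longrightarrow> F (\<lambda>w. X0 w + t *\<^sub>R Y w) = F (\<lambda>w. X0 w + t *\<^sub>R Y' w)"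
  shows "L Y = L Y'"
proof (rule tendsto_unique[OF trivial_limit_at_right_real])
  show "((\<lambda>t. (1 / t) *\<^sub>R (F (\<lambda>w. X0 w + t *\<^sub>R Y' w) - F X0)) \<longlongrightarrow> L Y) (at_right 0)"
    using frechet_L2_directional_derivative[OF F Y(1)]
    by (rule Lim_transform_eventually) (use eventually_at_right_less in \<open>eventually_elim, simp add: eq\<close>)
  show "((\<lambda>t. (1 / t) *\<^sub>R (F (\<lambda>w. X0 w + t *\<^sub>R Y' w) - F X0)) \<longlongrightarrow> L Y') (at_right 0)"
    by (rule frechet_L2_directional_derivative[OF F Y(2)])
qed

lemma (in prob_space) level_set_event:
  fixes X :: "'a \<Rightarrow> 'b::t1_space"
  assumes "X \<in> borel_measurable M"
  shows "{w\<in>space M. X w = c} \<in> events"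
  using measurable_sets[OF assms borel_closed[OF closed_singleton]]
  by (simp add: vimage_def Int_def conj_commute)

lemma (in prob_space) prob_eq_point_of_finite_law:
  fixes X :: "'a \<Rightarrow> 'h::{real_normed_vector, second_countable_topology}"
  assumes X: "X \<in> borel_measurable M"
    and law: "\<And>S. S \<in> sets borel \<Longrightarrow> measure (distr M borel X) S = (\<Sum>j\<in>I. p j * indicator S (x j))"
    and I: "finite I" "inj_on x I" "k \<in> I"
  shows "prob {w\<in>space M. X w = x k} = p k"
proof -
  have "prob {w\<in>space M. X w = x k} = measure (distr M borel X) {x k}"
    using X by (simp add: measure_distr vimage_def Int_def conj_commute)
  also have "\<dots> = (\<Sum>j\<in>I. p j * indicator {x k} (x j))"
    using law by simp
  also have "\<dots> = (\<Sum>j\<in>I. if j = k then p j else 0)"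
    using I by (intro sum.cong) (auto simp: inj_on_eq_iff)
  also have "\<dots> = p k"
    using I by simp
  finally show ?thesis .
qed

lemma (in prob_space) prob_preimage_add_indicator:
  fixes X :: "'a \<Rightarrow> 'h::{real_normed_vector, second_countable_topology}"
  assumes X: "X \<in> borel_measurable M" and C: "C = {w\<in>space M. X w = c}"
    and D: "D \<in> events" "D \<subseteq> C" and S: "S \<in> sets borel"
  shows "prob ((\<lambda>w. X w + indicator D w *\<^sub>R v) -` S \<inter> space M)
       = prob (X -` S \<inter> space M - C) + (if c \<in> S then prob C - prob D else 0)
         + (if c + v \<in> S then prob D else 0)"
proof -
  have C_ev: "C \<in> events"
    unfolding C using X by (rule level_set_event)
  define P1 where "P1 = X -` S \<inter> space M - C"
  define P2 where "P2 = (if c \<in> S then C - D else {})"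
  define P3 where "P3 = (if c + v \<in> S then D else {})"
  have "(\<lambda>w. X w + indicator D w *\<^sub>R v) -` S \<inter> space M = P1 \<union> P2 \<union> P3"
  proof (intro set_eqI)
    fix w
    consider "w \<in> D" | "w \<in> C - D" | "w \<notin> C" "w \<notin> D"
      using D(2) by blast
    then show "w \<in> (\<lambda>w. X w + indicator D w *\<^sub>R v) -` S \<inter> space M \<longleftrightarrow> w \<in> P1 \<union> P2 \<union> P3"
      by cases (use D in \<open>auto simp: C P1_def P2_def P3_def\<close>)
  qed
  moreover have "P1 \<in> events" "P2 \<in> events" "P3 \<in> events"
    using X S C_ev D by (auto simp: P1_def P2_def P3_def)
  moreover have "prob P2 = (if c \<in> S then prob C - prob D else 0)"
    using C_ev D by (simp add: P2_def finite_measure_Diff)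
  moreover have "prob P3 = (if c + v \<in> S then prob D else 0)"
    by (simp add: P3_def)
  moreover have "P1 \<inter> P2 = {}" "(P1 \<union> P2) \<inter> P3 = {}"
    using D by (auto simp: P1_def P2_def P3_def)
  ultimately show ?thesis
    by (simp add: finite_measure_Union P1_def)
qed

lemma (in prob_space) distr_add_indicator_eq:
  fixes X :: "'a \<Rightarrow> 'h::{real_normed_vector, second_countable_topology}"
  assumes X: "X \<in> borel_measurable M" and C: "C = {w\<in>space M. X w = c}"
    and D: "D \<in> events" "D \<subseteq> C" and D': "D' \<in> events" "D' \<subseteq> C" and eq: "prob D = prob D'"
  shows "distr M borel (\<lambda>w. X w + indicator D w *\<^sub>R v) = distr M borel (\<lambda>w. X w + indicator D' w *\<^sub>R v)"
proof (rule measure_eqI)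
  fix S
  assume "S \<in> sets (distr M borel (\<lambda>w. X w + indicator D w *\<^sub>R v))"
  then have S: "S \<in> sets borel"
    by simp
  have "(\<lambda>w. X w + indicator E w *\<^sub>R v) \<in> borel_measurable M" if "E \<in> events" for E
    using X that by measurable
  then show "emeasure (distr M borel (\<lambda>w. X w + indicator D w *\<^sub>R v)) S
           = emeasure (distr M borel (\<lambda>w. X w + indicator D' w *\<^sub>R v)) S"
    using D D' S eq
    by (simp add: emeasure_distr emeasure_eq_measure prob_preimage_add_indicator[OF X C])
qed simp

lemma (in prob_space) frechet_L2_lift_indicator_eq:
  fixes f :: "'h::{real_normed_vector, second_countable_topology} measure \<Rightarrow> 'u::real_normed_vector"
  assumes F: "frechet_L2 M (\<lambda>X. f (distr M borel X)) X0 L" and C: "C = {w\<in>space M. X0 w = c}"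
    and D: "D \<in> events" "D \<subseteq> C" and D': "D' \<in> events" "D' \<subseteq> C" and eq: "prob D = prob D'"
  shows "L (\<lambda>w. indicator D w *\<^sub>R u) = L (\<lambda>w. indicator D' w *\<^sub>R u)"
proof (rule frechet_L2_directional_eq[OF F])
  show "(\<lambda>w. indicator D w *\<^sub>R u) \<in> L2 M" "(\<lambda>w. indicator D' w *\<^sub>R u) \<in> L2 M"
    using D D' by (simp_all add: L2_indicator_scaleR finite_measure)
  have X0: "X0 \<in> borel_measurable M"
    using frechet_L2_L2[OF F] by (simp add: L2_def)
  fix t :: real
  show "f (distr M borel (\<lambda>w. X0 w + t *\<^sub>R (indicator D w *\<^sub>R u)))
      = f (distr M borel (\<lambda>w. X0 w + t *\<^sub>R (indicator D' w *\<^sub>R u)))"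
    using distr_add_indicator_eq[OF X0 C D D' eq, of "t *\<^sub>R u"] by (simp add: mult.commute)
qed

lemma (in prob_space) atomless_proportional_set_function:
  fixes \<Lambda> :: "'a set \<Rightarrow> 'b::real_normed_vector"
  assumes atomless: "atomless M" and C: "C \<in> events" "0 < prob C"
    and invariant: "\<And>D D'. D \<in> events \<Longrightarrow> D \<subseteq> C \<Longrightarrow> D' \<in> events \<Longrightarrow> D' \<subseteq> C \<Longrightarrow>
                      prob D = prob D' \<Longrightarrow> \<Lambda> D = \<Lambda> D'"
    and additive: "\<And>D D'. D \<in> events \<Longrightarrow> D' \<in> events \<Longrightarrow> D \<union> D' \<subseteq> C \<Longrightarrow> D \<inter> D' = {} \<Longrightarrow>
                      \<Lambda> (D \<union> D') = \<Lambda> D + \<Lambda> D'"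
    and bound: "\<And>D. D \<in> events \<Longrightarrow> D \<subseteq> C \<Longrightarrow> norm (\<Lambda> D) \<le> K * sqrt (prob D)"
    and B: "B \<in> events" "B \<subseteq> C"
  shows "\<Lambda> B = (prob B / prob C) *\<^sub>R \<Lambda> C"
proof -
  have prob_le: "prob D \<le> prob C" if "D \<subseteq> C" for D
    using that C(1) by (rule finite_measure_mono)
  note exists = atomless_exists_subevent_prob_eq[OF atomless]
  have "\<forall>t. \<exists>D. 0 \<le> t \<and> t \<le> prob C \<longrightarrow> D \<in> events \<and> D \<subseteq> C \<and> prob D = t"
    using exists[OF C(1)] by metis
  then obtain sel where sel: "\<And>t. 0 \<le> t \<Longrightarrow> t \<le> prob C \<Longrightarrow> sel t \<in> events \<and> sel t \<subseteq> C \<and> prob (sel t) = t"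
    by metis
  define \<phi> where "\<phi> t = \<Lambda> (sel t)" for t
  have \<phi>: "\<phi> (prob D) = \<Lambda> D" if D: "D \<in> events" "D \<subseteq> C" for D
    using sel[OF measure_nonneg prob_le[OF D(2)]] D unfolding \<phi>_def by (intro invariant) auto
  have "\<phi> (prob B) = (prob B / prob C) *\<^sub>R \<phi> (prob C)"
  proof (rule additive_on_interval_linear[OF C(2)])
    fix a b :: real
    assume ab: "0 \<le> a" "0 \<le> b" "a + b \<le> prob C"
    obtain D where D: "D \<in> events" "D \<subseteq> C" "prob D = a"
      using exists[OF C(1), of a] ab by auto
    have "prob (C - D) = prob C - a"
      using C(1) D by (simp add: finite_measure_Diff)
    then obtain D' where D': "D' \<in> events" "D' \<subseteq> C - D" "prob D' = b"
      using exists[of "C - D" b] C(1) D ab by auto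
    have D'_C: "D' \<subseteq> C" "D \<inter> D' = {}"
      using D' by auto
    have "prob (D \<union> D') = a + b"
      using D D' D'_C by (subst finite_measure_Union) auto
    then have "\<phi> (a + b) = \<Lambda> (D \<union> D')"
      using \<phi>[of "D \<union> D'"] D D' D'_C by auto
    also have "\<dots> = \<Lambda> D + \<Lambda> D'"
      using D D' D'_C by (intro additive) auto
    also have "\<dots> = \<phi> a + \<phi> b"
      using \<phi>[OF D(1,2)] \<phi>[OF D'(1) D'_C(1)] D D' by simp
    finally show "\<phi> (a + b) = \<phi> a + \<phi> b" .
  next
    fix t :: real
    assume "0 \<le> t" "t \<le> prob C"
    then obtain D where "D \<in> events" "D \<subseteq> C" "prob D = t"
      using exists[OF C(1)] by blast
    then show "norm (\<phi> t) \<le> K * sqrt t"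
      using \<phi> bound by metis
  qed (use B prob_le in auto)
  then show ?thesis
    using \<phi> B C by simp
qed

theorem lemma3p2:
  fixes B :: "'w::polish_space measure"
    and M :: "'w measure"
    and f :: "'h::{real_inner, complete_space, second_countable_topology} measure \<Rightarrow>
              'u::{real_inner, complete_space, second_countable_topology}"
    and X0 :: "'w \<Rightarrow> 'h"
    and N :: nat and x :: "nat \<Rightarrow> 'h" and p :: "nat \<Rightarrow> real"
    and L :: "('w \<Rightarrow> 'h) \<Rightarrow> 'u"
    and k :: nat and A :: "'w set" and u :: 'h
  assumes Borel: "sets B = sets borel"
    and M_def: "M = completion B"
    and prob: "prob_space M"
    and atoml: "atomless M"
    and X0_L2: "X0 \<in> L2 M"
    and x_dist: "inj_on x {1..N}"
    and p_pos: "\<And>j. j \<in> {1..N} \<Longrightarrow> p j > 0"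
    and p_sum: "(\<Sum>j=1..N. p j) = 1"
    and law: "\<And>S. S \<in> sets borel \<Longrightarrow>
                measure (distr M borel X0) S = (\<Sum>j=1..N. p j * indicator S (x j))"
    and diff: "frechet_L2 M (\<lambda>X. f (distr M borel X)) X0 L"
    and LamL: "Lambda2 M L"
    and k: "k \<in> {1..N}"
    and A: "A \<in> sets M"
  shows "L (\<lambda>w. indicator (A \<inter> {w\<in>space M. X0 w = x k}) w *\<^sub>R u)
         = (measure M (A \<inter> {w\<in>space M. X0 w = x k}) / p k)
             *\<^sub>R L (\<lambda>w. indicator {w\<in>space M. X0 w = x k} w *\<^sub>R u)"
proof -
  interpret prob_space M
    by (rule prob)
  define C where "C = {w\<in>space M. X0 w = x k}"
  have X0: "X0 \<in> borel_measurable M"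
    using X0_L2 by (simp add: L2_def)
  have C_ev: "C \<in> events"
    unfolding C_def using X0 by (rule level_set_event)
  have prob_C: "prob C = p k"
    unfolding C_def using X0 law x_dist k by (intro prob_eq_point_of_finite_law) auto
  have L: "bounded_linear_L2 M L"
    by (rule frechet_L2_bounded_linear[OF diff])
  obtain K where K: "\<And>D. D \<in> events \<Longrightarrow> norm (L (\<lambda>w. indicator D w *\<^sub>R u)) \<le> K * sqrt (prob D)"
    using bounded_linear_L2_indicator_bound[OF L finite_measure] by blast
  have "L (\<lambda>w. indicator (A \<inter> C) w *\<^sub>R u) = (prob (A \<inter> C) / prob C) *\<^sub>R L (\<lambda>w. indicator C w *\<^sub>R u)"
  proof (rule atomless_proportional_set_function[where \<Lambda>="\<lambda>D. L (\<lambda>w. indicator D w *\<^sub>R u)",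
        OF atoml C_ev])
    show "0 < prob C"
      using prob_C p_pos k by simp
    show "L (\<lambda>w. indicator D w *\<^sub>R u) = L (\<lambda>w. indicator D' w *\<^sub>R u)"
      if "D \<in> events" "D \<subseteq> C" "D' \<in> events" "D' \<subseteq> C" "prob D = prob D'" for D D'
      using frechet_L2_lift_indicator_eq[OF diff C_def that] .
    show "L (\<lambda>w. indicator (D \<union> D') w *\<^sub>R u) = L (\<lambda>w. indicator D w *\<^sub>R u) + L (\<lambda>w. indicator D' w *\<^sub>R u)"
      if "D \<in> events" "D' \<in> events" "D \<inter> D' = {}" for D D'
      using bounded_linear_L2_indicator_Un[OF L finite_measure that] .
  qed (use A C_ev K in auto)
  then show ?thesis
    using prob_C by (simp add: C_def)
qed

end
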